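(* Let $\Omega \subset \mathbf{R}^{n+1}$ be a compact connected set with smooth mean convex boundary, and let $u \colon \Omega \to \mathbf{R}$ be a $C^2$ solution of the arrival time equation $$-1 = |\nabla u|\,\operatorname{div}\!\left(\frac{\nabla u}{|\nabla u|}\right)$$ which is constant on $\partial \Omega$ and satisfies $\sup u = 0$. Let $\mathcal{S} = \{x : \nabla u(x) = 0\}$ be its critical set. Let $\gamma$ be a gradient flow line of $u$ that limits to a point of $\mathcal{S}$, parametrized by arclength $s \ge 0$ (so $|\gamma_s| = 1$) with $\gamma(0) \in \mathcal{S}$ and $\gamma_s = -\frac{\nabla u}{|\nabla u|}$ for $s > 0$. Then for every $\Lambda > 1$, $$\lim_{s \to 0^+} \int_{s}^{\Lambda s} |\gamma_{ss}| \, ds = 0 .$$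
   Context: A gradient flow line of $u$ is a solution $x(t)$ of $x'(t) = \nabla u(x(t))$. The arclength parametrization $\gamma(s)$ traverses this curve with $s$ measured from the limit point $\gamma(0) \in \mathcal{S}$, so that increasing $s$ moves away from the critical set, and $\gamma_{ss}$ denotes the second derivative with respect to $s$. *)

theory Defs
  imports "HOL-Analysis.Analysis"
begin

definition grad :: "('a::euclidean_space \<Rightarrow> real) \<Rightarrow> 'a \<Rightarrow> 'a" where
  "grad f x = (\<Sum>i\<in>Basis. frechet_derivative f (at x) i *\<^sub>R i)"

definition divergence :: "('a::euclidean_space \<Rightarrow> 'a) \<Rightarrow> 'a \<Rightarrow> real" where
  "divergence F x = (\<Sum>i\<in>Basis. frechet_derivative F (at x) i \<bullet> i)"

fun dderivs :: "'a::euclidean_space list \<Rightarrow> ('a \<Rightarrow> real) \<Rightarrow> 'a \<Rightarrow> real" where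
  "dderivs [] f = f"
| "dderivs (v # vs) f = (\<lambda>x. frechet_derivative (dderivs vs f) (at x) v)"

definition C2_on :: "'a::euclidean_space set \<Rightarrow> ('a \<Rightarrow> real) \<Rightarrow> bool" where
  "C2_on U f \<longleftrightarrow> open U \<and>
     (\<forall>vs. length vs \<le> 1 \<longrightarrow> (\<forall>x\<in>U. dderivs vs f differentiable (at x))) \<and>
     (\<forall>v w. continuous_on U (dderivs [v, w] f))"

definition smooth_on :: "'a::euclidean_space set \<Rightarrow> ('a \<Rightarrow> real) \<Rightarrow> bool" where
  "smooth_on U f \<longleftrightarrow> open U \<and> (\<forall>vs. \<forall>x\<in>U. dderivs vs f differentiable (at x))"

text \<open>Omega has smooth mean convex boundary: near the boundary, Omega = {phi \<le> 0} for a
  smooth phi with nonvanishing gradient on the boundary, and the mean curvature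
  H = div(grad phi / |grad phi|) (w.r.t. the outward normal) is nonnegative on the boundary.\<close>
definition smooth_mean_convex_boundary :: "'a::euclidean_space set \<Rightarrow> bool" where
  "smooth_mean_convex_boundary \<Omega> \<longleftrightarrow>
     (\<exists>U \<phi>. open U \<and> frontier \<Omega> \<subseteq> U \<and> smooth_on U \<phi> \<and>
        \<Omega> \<inter> U = {x\<in>U. \<phi> x \<le> 0} \<and>
        (\<forall>x\<in>frontier \<Omega>. grad \<phi> x \<noteq> 0 \<and>
            divergence (\<lambda>y. grad \<phi> y /\<^sub>R norm (grad \<phi> y)) x \<ge> 0))"

end

theory Submission
  imports Defs
begin

text \<open>
  Write g = grad u, H = hess u and n = g / |g|; where g \<noteq> 0 the equation says
  n \<bullet> H n = tr H + 1. Let A = H (\<gamma> 0) and m = tr A + 1. Along a ray \<gamma> 0 + \<tau> v entering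
  \<Omega> one has g / \<tau> \<rightarrow> A v, so the equation passes to the limit \<tau> \<rightarrow> 0 and gives
  A v \<bullet> A (A v) = m |A v|^2. The entering directions contain a nonempty open set (\<Omega> is a
  neighbourhood of \<gamma> 0 or, near \<gamma> 0, a sublevel set of a function with nonzero gradient),
  so polarisation and the symmetry of A give A^2 = m A.

  Along \<gamma> the speed \<lambda> = |g \<circ> \<gamma>| satisfies \<lambda>' = - n \<bullet> H n \<rightarrow> -m, hence \<lambda>(s) / s \<rightarrow> -m.
  As \<lambda> > 0 this forces m \<le> 0, and m = 0 is impossible since it would give A = 0 and then
  m = 1. The curvature is \<gamma>'' = (H n - (n \<bullet> H n) n) / \<lambda>, and since A^2 = m A the tangential
  part of A n has squared norm (n \<bullet> A n) (m - n \<bullet> A n), which tends to 0. Hence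
  s |\<gamma>''(s)| \<rightarrow> 0, and the integral of |\<gamma>''| over [s, \<Lambda> s] is at most
  ln \<Lambda> \<cdot> sup t |\<gamma>''(t)| \<rightarrow> 0.
\<close>

section \<open>Gradient and Hessian\<close>

lemma linear_eq_sum_Basis:
  assumes "linear T"
  shows "T z = (\<Sum>i\<in>Basis. (z \<bullet> i) *\<^sub>R T i)"
  by (metis (no_types, lifting) assms euclidean_representation linear_scale linear_sum sum.cong)

lemma linear_functional_eq_inner:
  fixes f :: "'a::euclidean_space \<Rightarrow> real"
  assumes "linear f"
  shows "f v = (\<Sum>i\<in>Basis. f i *\<^sub>R i) \<bullet> v"
  using linear_eq_sum_Basis[OF assms, of v] by (simp add: inner_sum_right inner_commute mult.commute)

lemma has_derivative_grad:
  assumes "f differentiable (at x)"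
  shows "(f has_derivative (\<lambda>v. grad f x \<bullet> v)) (at x)"
proof -
  have f': "(f has_derivative frechet_derivative f (at x)) (at x)"
    using assms by (rule frechet_derivative_works[THEN iffD1])
  then have "frechet_derivative f (at x) = (\<lambda>v. grad f x \<bullet> v)"
    unfolding grad_def using linear_functional_eq_inner has_derivative_linear by blast
  with f' show ?thesis by simp
qed

definition hess :: "('a::euclidean_space \<Rightarrow> real) \<Rightarrow> 'a \<Rightarrow> 'a \<Rightarrow> 'a" where
  "hess f x v = (\<Sum>i\<in>Basis. frechet_derivative (\<lambda>y. frechet_derivative f (at y) i) (at x) v *\<^sub>R i)"

lemma C2_on_has_derivative_grad:
  assumes "C2_on U f" "x \<in> U"
  shows "(f has_derivative (\<lambda>v. grad f x \<bullet> v)) (at x)"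
proof -
  have "dderivs [] f differentiable (at x)"
    using assms unfolding C2_on_def by (metis list.size(3) zero_le_one)
  then show ?thesis by (simp add: has_derivative_grad)
qed

lemma C2_on_has_derivative_hess:
  assumes "C2_on U f" "x \<in> U"
  shows "(grad f has_derivative hess f x) (at x)"
proof -
  have "dderivs [i] f differentiable (at x)" for i
    using assms unfolding C2_on_def by (metis One_nat_def le_refl list.size(3,4) plus_nat.add_0)
  then have "((\<lambda>y. frechet_derivative f (at y) i) has_derivative
      frechet_derivative (\<lambda>y. frechet_derivative f (at y) i) (at x)) (at x)" for i
    by (simp add: frechet_derivative_works)
  then show ?thesis
    unfolding grad_def[abs_def] hess_def[abs_def] by (intro has_derivative_sum has_derivative_scaleR_left)
qed

lemma C2_on_continuous_on_hess:
  assumes "C2_on U f"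
  shows "continuous_on U (\<lambda>y. hess f y v)"
proof -
  have "continuous_on U (dderivs [v, i] f)" for i
    using assms unfolding C2_on_def by blast
  then show ?thesis unfolding hess_def by (intro continuous_intros) simp
qed

lemma has_vector_derivative_along_line:
  assumes "(f has_derivative f') (at (a + s *\<^sub>R b))"
  shows "((\<lambda>t. f (a + t *\<^sub>R b)) has_vector_derivative f' b) (at s)"
proof -
  have "((\<lambda>t. a + t *\<^sub>R b) has_derivative (\<lambda>t. t *\<^sub>R b)) (at s)"
    by (auto intro!: derivative_eq_intros)
  from has_derivative_compose[OF this assms] show ?thesis
    by (simp add: has_vector_derivative_def linear_scale[OF has_derivative_linear[OF assms]])
qed

lemma second_difference_mean_value:
  fixes f :: "'a::real_inner \<Rightarrow> real"
  assumes f': "\<And>y. y \<in> S \<Longrightarrow> (f has_derivative (\<lambda>v. g y \<bullet> v)) (at y)"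
    and g': "\<And>y. y \<in> S \<Longrightarrow> (g has_derivative H y) (at y)"
    and "0 < h"
    and S: "\<And>s t. s \<in> {0..h} \<Longrightarrow> t \<in> {0..h} \<Longrightarrow> x + s *\<^sub>R v + t *\<^sub>R w \<in> S"
  shows "\<exists>s\<in>{0<..<h}. \<exists>t\<in>{0<..<h}.
    f (x + h *\<^sub>R v + h *\<^sub>R w) - f (x + h *\<^sub>R v) - f (x + h *\<^sub>R w) + f x =
      h\<^sup>2 * (H (x + s *\<^sub>R v + t *\<^sub>R w) w \<bullet> v)"
proof -
  have "DERIV (\<lambda>s. f ((x + h *\<^sub>R w) + s *\<^sub>R v) - f (x + s *\<^sub>R v)) s :>
      g ((x + h *\<^sub>R w) + s *\<^sub>R v) \<bullet> v - g (x + s *\<^sub>R v) \<bullet> v" if "0 \<le> s" "s \<le> h" for s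
    using S[of s h] S[of s 0] that \<open>0 < h\<close>
    by (intro DERIV_diff has_vector_derivative_along_line[THEN has_real_derivative_iff_has_vector_derivative[THEN iffD2]] f')
      (auto simp: add_ac)
  from MVT2[OF \<open>0 < h\<close> this] obtain s where s: "0 < s" "s < h"
    "f (x + h *\<^sub>R v + h *\<^sub>R w) - f (x + h *\<^sub>R v) - f (x + h *\<^sub>R w) + f x =
      h * (g ((x + s *\<^sub>R v) + h *\<^sub>R w) \<bullet> v - g ((x + s *\<^sub>R v) + 0 *\<^sub>R w) \<bullet> v)"
    by (auto simp: add_ac)
  have "DERIV (\<lambda>t. g ((x + s *\<^sub>R v) + t *\<^sub>R w) \<bullet> v) t :> H (x + s *\<^sub>R v + t *\<^sub>R w) w \<bullet> v"
    if "0 \<le> t" "t \<le> h" for t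
  proof -
    have "((\<lambda>t. g ((x + s *\<^sub>R v) + t *\<^sub>R w)) has_vector_derivative H (x + s *\<^sub>R v + t *\<^sub>R w) w) (at t)"
      using S[of s t] s that by (intro has_vector_derivative_along_line g') auto
    then show ?thesis
      by (simp add: has_real_derivative_iff_has_vector_derivative
          bounded_linear.has_vector_derivative[OF bounded_linear_inner_left])
  qed
  from MVT2[OF \<open>0 < h\<close> this] obtain t where t: "0 < t" "t < h"
    "g ((x + s *\<^sub>R v) + h *\<^sub>R w) \<bullet> v - g ((x + s *\<^sub>R v) + 0 *\<^sub>R w) \<bullet> v =
      h * (H (x + s *\<^sub>R v + t *\<^sub>R w) w \<bullet> v)"
    by auto
  with s have "f (x + h *\<^sub>R v + h *\<^sub>R w) - f (x + h *\<^sub>R v) - f (x + h *\<^sub>R w) + f x =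
      h\<^sup>2 * (H (x + s *\<^sub>R v + t *\<^sub>R w) w \<bullet> v)"
    by (simp add: power2_eq_square)
  then show ?thesis using s(1,2) t(1,2) by (meson greaterThanLessThan_iff)
qed

lemma dist_add_scaleR_le:
  fixes x v w :: "'a::real_normed_vector"
  assumes "s \<in> {0..h}" "t \<in> {0..h}"
  shows "dist (x + s *\<^sub>R v + t *\<^sub>R w) x \<le> h * (norm v + norm w)"
proof -
  have "norm (s *\<^sub>R v + t *\<^sub>R w) \<le> s * norm v + t * norm w"
    using assms norm_triangle_ineq[of "s *\<^sub>R v" "t *\<^sub>R w"] by simp
  also have "\<dots> \<le> h * norm v + h * norm w"
    using assms by (intro add_mono mult_right_mono) auto
  finally show ?thesis
    by (simp add: dist_norm add.assoc distrib_left)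
qed

lemma second_difference_quotient_tendsto:
  fixes f :: "'a::real_inner \<Rightarrow> real"
  assumes "open U" "x \<in> U"
    and f': "\<And>y. y \<in> U \<Longrightarrow> (f has_derivative (\<lambda>v. g y \<bullet> v)) (at y)"
    and g': "\<And>y. y \<in> U \<Longrightarrow> (g has_derivative H y) (at y)"
    and H: "isCont (\<lambda>y. H y w \<bullet> v) x"
  shows "((\<lambda>h. (f (x + h *\<^sub>R v + h *\<^sub>R w) - f (x + h *\<^sub>R v) - f (x + h *\<^sub>R w) + f x) / h\<^sup>2)
           \<longlongrightarrow> H x w \<bullet> v) (at_right 0)"
proof (rule tendstoI)
  fix \<epsilon> :: real
  assume "\<epsilon> > 0"
  with H obtain \<delta> where "\<delta> > 0" and \<delta>: "\<And>y. dist y x < \<delta> \<Longrightarrow> dist (H y w \<bullet> v) (H x w \<bullet> v) < \<epsilon>"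
    unfolding continuous_at_eps_delta by blast
  obtain r where "r > 0" and r: "ball x r \<subseteq> U"
    using assms(1,2) open_contains_ball by blast
  define K where "K = norm v + norm w + 1"
  have "K > 0" by (simp add: K_def add_nonneg_pos)
  have near: "dist (x + s *\<^sub>R v + t *\<^sub>R w) x < min \<delta> r"
    if "s \<in> {0..h}" "t \<in> {0..h}" "h * K < min \<delta> r" for s t h
    using dist_add_scaleR_le[OF that(1,2), of x v w] that by (simp add: K_def distrib_left)
  have "\<forall>\<^sub>F h in at_right 0. 0 < h \<and> h * K < min \<delta> r"
    unfolding eventually_at_right_field
    using \<open>K > 0\<close> \<open>\<delta> > 0\<close> \<open>r > 0\<close> by (intro exI[of _ "min \<delta> r / K"]) (auto simp: field_simps)
  then show "\<forall>\<^sub>F h in at_right 0. dist ((f (x + h *\<^sub>R v + h *\<^sub>R w) - f (x + h *\<^sub>R v) -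
      f (x + h *\<^sub>R w) + f x) / h\<^sup>2) (H x w \<bullet> v) < \<epsilon>"
  proof eventually_elim
    case (elim h)
    have inU: "x + s *\<^sub>R v + t *\<^sub>R w \<in> U" if "s \<in> {0..h}" "t \<in> {0..h}" for s t
      using near[OF that] elim r by (auto simp: dist_commute)
    from second_difference_mean_value[OF f' g' _ inU] elim obtain s t
      where "s \<in> {0<..<h}" "t \<in> {0<..<h}" and D:
      "f (x + h *\<^sub>R v + h *\<^sub>R w) - f (x + h *\<^sub>R v) - f (x + h *\<^sub>R w) + f x =
        h\<^sup>2 * (H (x + s *\<^sub>R v + t *\<^sub>R w) w \<bullet> v)"
      by blast
    with elim have "dist (H (x + s *\<^sub>R v + t *\<^sub>R w) w \<bullet> v) (H x w \<bullet> v) < \<epsilon>"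
      by (intro \<delta> less_le_trans[OF near]) auto
    with elim show ?case by (simp add: D)
  qed
qed

lemma second_derivative_symmetric:
  fixes f :: "'a::real_inner \<Rightarrow> real"
  assumes "open U" "x \<in> U"
    and f': "\<And>y. y \<in> U \<Longrightarrow> (f has_derivative (\<lambda>v. g y \<bullet> v)) (at y)"
    and g': "\<And>y. y \<in> U \<Longrightarrow> (g has_derivative H y) (at y)"
    and H: "\<And>v. continuous_on U (\<lambda>y. H y v)"
  shows "H x v \<bullet> w = H x w \<bullet> v"
proof -
  have cont: "isCont (\<lambda>y. H y a \<bullet> b) x" for a b
    using H assms(1,2) by (auto intro!: continuous_intros simp: continuous_on_eq_continuous_at)
  have swap: "x + h *\<^sub>R w + h *\<^sub>R v = x + h *\<^sub>R v + h *\<^sub>R w" for h :: real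
    by (simp add: algebra_simps)
  have "f (x + h *\<^sub>R w + h *\<^sub>R v) - f (x + h *\<^sub>R w) - f (x + h *\<^sub>R v) + f x =
      f (x + h *\<^sub>R v + h *\<^sub>R w) - f (x + h *\<^sub>R v) - f (x + h *\<^sub>R w) + f x" for h
    unfolding swap by simp
  with second_difference_quotient_tendsto[OF assms(1,2) f' g' cont, of w v]
  have "((\<lambda>h. (f (x + h *\<^sub>R v + h *\<^sub>R w) - f (x + h *\<^sub>R v) - f (x + h *\<^sub>R w) + f x) / h\<^sup>2)
          \<longlongrightarrow> H x v \<bullet> w) (at_right 0)"
    by simp
  from tendsto_unique[OF trivial_limit_at_right_real this
      second_difference_quotient_tendsto[OF assms(1,2) f' g' cont]]
  show ?thesis .
qed

lemma C2_on_hess_symmetric: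
  assumes "C2_on U f" "x \<in> U"
  shows "hess f x v \<bullet> w = hess f x w \<bullet> v"
  using assms C2_on_def
  by (blast intro: second_derivative_symmetric C2_on_has_derivative_grad
      C2_on_has_derivative_hess C2_on_continuous_on_hess)

section \<open>The normalised gradient\<close>

definition trace_map :: "('a::euclidean_space \<Rightarrow> 'a) \<Rightarrow> real" where
  "trace_map T = (\<Sum>i\<in>Basis. T i \<bullet> i)"

lemma has_derivative_norm_compose:
  fixes g :: "'b::real_normed_vector \<Rightarrow> 'c::real_inner"
  assumes "(g has_derivative G) (at x within S)" "g x \<noteq> 0"
  shows "((\<lambda>y. norm (g y)) has_derivative (\<lambda>v. sgn (g x) \<bullet> G v)) (at x within S)"
  using has_derivative_compose[OF assms(1) has_derivative_norm[OF assms(2)]] by (simp add: inner_commute)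

lemma has_derivative_sgn_compose:
  fixes g :: "'b::real_normed_vector \<Rightarrow> 'c::real_inner"
  assumes "(g has_derivative G) (at x within S)" "g x \<noteq> 0"
  shows "((\<lambda>y. sgn (g y)) has_derivative
           (\<lambda>v. (G v - (sgn (g x) \<bullet> G v) *\<^sub>R sgn (g x)) /\<^sub>R norm (g x))) (at x within S)"
proof -
  have "((\<lambda>y. inverse (norm (g y)) *\<^sub>R g y) has_derivative
      (\<lambda>v. inverse (norm (g x)) *\<^sub>R G v -
        (inverse (norm (g x)) * (sgn (g x) \<bullet> G v) * inverse (norm (g x))) *\<^sub>R g x)) (at x within S)"
    using assms by (auto intro!: derivative_eq_intros has_derivative_norm_compose)
  moreover have "sgn (g y) = inverse (norm (g y)) *\<^sub>R g y" for y
    by (simp add: sgn_div_norm)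
  ultimately show ?thesis
    using assms(2) by (simp add: sgn_div_norm algebra_simps)
qed

lemma divergence_sgn_compose:
  fixes g :: "'a::euclidean_space \<Rightarrow> 'a"
  assumes "(g has_derivative G) (at x)" "g x \<noteq> 0"
  shows "divergence (\<lambda>y. sgn (g y)) x = (trace_map G - sgn (g x) \<bullet> G (sgn (g x))) / norm (g x)"
proof -
  define n where "n = sgn (g x)"
  have "(\<Sum>i\<in>Basis. (n \<bullet> G i) * (n \<bullet> i)) = n \<bullet> G n"
    using linear_eq_sum_Basis[OF has_derivative_linear[OF assms(1)], of n]
    by (simp add: inner_sum_right mult.commute)
  then show ?thesis
    using frechet_derivative_at[OF has_derivative_sgn_compose[OF assms], symmetric]
    unfolding divergence_def trace_map_def n_def[symmetric]
    by (simp add: inner_diff_left sum_distrib_left[symmetric] sum_subtractf divide_inverse_commute)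
qed

lemma arrival_time_equation_iff:
  fixes g :: "'a::euclidean_space \<Rightarrow> 'a"
  assumes "(g has_derivative G) (at x)" "g x \<noteq> 0"
  shows "-1 = norm (g x) * divergence (\<lambda>y. g y /\<^sub>R norm (g y)) x \<longleftrightarrow>
    sgn (g x) \<bullet> G (sgn (g x)) = trace_map G + 1"
  using divergence_sgn_compose[OF assms] assms(2) by (auto simp: sgn_div_norm[symmetric])

section \<open>Linear maps\<close>

lemma norm_linear_le_sum_Basis:
  assumes "linear T" "norm z \<le> 1"
  shows "norm (T z) \<le> (\<Sum>i\<in>Basis. norm (T i))"
proof -
  have "norm (T z) \<le> (\<Sum>i\<in>Basis. norm ((z \<bullet> i) *\<^sub>R T i))"
    unfolding linear_eq_sum_Basis[OF assms(1), of z] by (rule norm_sum)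
  also have "\<dots> \<le> (\<Sum>i\<in>Basis. norm (T i))"
  proof (rule sum_mono)
    fix i :: 'a
    assume "i \<in> Basis"
    then have "\<bar>z \<bullet> i\<bar> \<le> 1"
      using Basis_le_norm[of i z] assms(2) by linarith
    then show "norm ((z \<bullet> i) *\<^sub>R T i) \<le> norm (T i)"
      by (simp add: mult_left_le_one_le)
  qed
  finally show ?thesis .
qed

lemma linear_family_apply_diff_tendsto_0:
  fixes T :: "'b \<Rightarrow> 'a::euclidean_space \<Rightarrow> 'c::real_normed_vector"
  assumes "\<forall>\<^sub>F t in F. linear (T t)" "linear A"
    and "\<And>i. i \<in> Basis \<Longrightarrow> ((\<lambda>t. T t i) \<longlongrightarrow> A i) F"
    and "\<forall>\<^sub>F t in F. norm (z t) \<le> 1"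
  shows "((\<lambda>t. T t (z t) - A (z t)) \<longlongrightarrow> 0) F"
proof (rule Lim_null_comparison)
  show "\<forall>\<^sub>F t in F. norm (T t (z t) - A (z t)) \<le> (\<Sum>i\<in>Basis. norm (T t i - A i))"
    using assms(1,4) by eventually_elim (use assms(2) in \<open>auto intro: norm_linear_le_sum_Basis linear_compose_sub\<close>)
  have "((\<lambda>t. \<Sum>i\<in>Basis. norm (T t i - A i)) \<longlongrightarrow> (\<Sum>i\<in>(Basis::'a set). norm (A i - A i))) F"
    by (intro tendsto_intros assms(3))
  then show "((\<lambda>t. \<Sum>i\<in>Basis. norm (T t i - A i)) \<longlongrightarrow> 0) F"
    by simp
qed

lemma linear_family_apply_tendsto:
  fixes T :: "'b \<Rightarrow> 'a::euclidean_space \<Rightarrow> 'c::real_normed_vector"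
  assumes "\<forall>\<^sub>F t in F. linear (T t)" "linear A"
    and "\<And>i. i \<in> Basis \<Longrightarrow> ((\<lambda>t. T t i) \<longlongrightarrow> A i) F"
    and "\<forall>\<^sub>F t in F. norm (z t) \<le> 1" "(z \<longlongrightarrow> e) F"
  shows "((\<lambda>t. T t (z t)) \<longlongrightarrow> A e) F"
proof -
  have "bounded_linear A"
    using assms(2) by (simp add: linear_conv_bounded_linear)
  then have "((\<lambda>t. A (z t)) \<longlongrightarrow> A e) F"
    using assms(5) by (rule bounded_linear.tendsto)
  with linear_family_apply_diff_tendsto_0[OF assms(1-4)]
  have "((\<lambda>t. (T t (z t) - A (z t)) + A (z t)) \<longlongrightarrow> 0 + A e) F"
    by (rule tendsto_add)
  then show ?thesis
    by simp
qed

lemma symmetric_linear_eq_0: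
  fixes T :: "'a::real_inner \<Rightarrow> 'a"
  assumes T: "linear T" and sym: "\<And>x y. T x \<bullet> y = T y \<bullet> x"
    and W: "open W" "v \<in> W" and zero: "\<And>w. w \<in> W \<Longrightarrow> T w \<bullet> w = 0"
  shows "T x = 0"
proof -
  have T_add: "T (a + b) \<bullet> (a + b) = T a \<bullet> a + 2 * (T a \<bullet> b) + T b \<bullet> b" for a b
    using sym[of b a] by (simp add: linear_add[OF T] inner_add algebra_simps)
  have diagonal: "T d \<bullet> d = 0" for d
  proof -
    obtain r where "r > 0" "ball v r \<subseteq> W"
      using W open_contains_ball by blast
    define t where "t = r / (2 * (norm d + 1))"
    have "t > 0" using \<open>r > 0\<close> by (simp add: t_def add_nonneg_pos)
    have "t * (norm d + 1) = r / 2"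
      using norm_ge_zero[of d] unfolding t_def by (simp add: field_simps del: norm_ge_zero)
    then have "t * norm d < r"
      using \<open>r > 0\<close> \<open>t > 0\<close> by (simp add: algebra_simps)
    then have "v + t *\<^sub>R d \<in> W" "v + (- t) *\<^sub>R d \<in> W"
      using \<open>ball v r \<subseteq> W\<close> \<open>t > 0\<close> by (auto simp: dist_norm subset_iff)
    then have "T (v + t *\<^sub>R d) \<bullet> (v + t *\<^sub>R d) + T (v + (- t) *\<^sub>R d) \<bullet> (v + (- t) *\<^sub>R d) = 0"
      by (simp add: zero)
    then have "t\<^sup>2 * (T d \<bullet> d) = 0"
      using zero[OF W(2)] unfolding T_add
      by (simp add: linear_scale[OF T] linear_neg[OF T] algebra_simps power2_eq_square)
    then show ?thesis using \<open>t > 0\<close> by simp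
  qed
  have "T x \<bullet> T x = 0"
    using T_add[of x "T x"] diagonal by simp
  then show ?thesis by simp
qed

lemma square_eq_scaleR_if_quadratic_identity:
  fixes A :: "'a::real_inner \<Rightarrow> 'a"
  assumes A: "linear A" and sym: "\<And>x y. A x \<bullet> y = A y \<bullet> x"
    and W: "open W" "v \<in> W" and quadratic: "\<And>w. w \<in> W \<Longrightarrow> A w \<bullet> A (A w) = m * (A w \<bullet> A w)"
  shows "A (A x) = m *\<^sub>R A x"
proof -
  define T where "T x = A (A (A x)) - m *\<^sub>R A (A x)" for x
  have cube_inner: "A (A (A x)) \<bullet> y = A x \<bullet> A (A y)" for x y
    using sym[of "A (A x)" y] sym[of "A x" "A y"] by (metis inner_commute)
  have square_inner: "A (A x) \<bullet> y = A x \<bullet> A y" for x y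
    using sym[of "A x" y] by (simp add: inner_commute)
  have T_inner: "T x \<bullet> y = A x \<bullet> A (A y) - m * (A x \<bullet> A y)" for x y
    by (simp add: T_def inner_diff_left cube_inner square_inner)
  have "linear T"
    by (simp add: linear_iff T_def linear_add[OF A] linear_scale[OF A] algebra_simps)
  moreover have "T x \<bullet> y = T y \<bullet> x" for x y
    unfolding T_inner using sym[of "A x" "A y"] sym[of "A y" "A x"] by (simp add: inner_commute)
  moreover have "T w \<bullet> w = 0" if "w \<in> W" for w
    using quadratic[OF that] by (simp add: T_inner)
  ultimately have "T y = 0" for y
    using symmetric_linear_eq_0 W by blast
  then have cube: "A (A (A x)) = m *\<^sub>R A (A x)" and diagonal: "A x \<bullet> A (A x) = m * (A x \<bullet> A x)"
    using T_inner[of x x] by (auto simp: T_def)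
  have "A (A x) \<bullet> A (A x) = m * (A (A x) \<bullet> A x)"
    using sym[of "A x" "A (A x)"] cube by simp
  then have "(A (A x) - m *\<^sub>R A x) \<bullet> (A (A x) - m *\<^sub>R A x) = 0"
    using diagonal by (simp add: inner_diff inner_commute algebra_simps power2_eq_square)
  then show ?thesis by simp
qed

lemma norm_tangential_part_squared:
  fixes A :: "'a::real_inner \<Rightarrow> 'a"
  assumes sym: "\<And>v w. A v \<bullet> w = A w \<bullet> v" and square: "\<And>v. A (A v) = m *\<^sub>R A v"
    and "norm z = 1"
  shows "(norm (A z - (z \<bullet> A z) *\<^sub>R z))\<^sup>2 = m * (z \<bullet> A z) - (z \<bullet> A z)\<^sup>2"
proof -
  have "A z \<bullet> A z = m * (z \<bullet> A z)"
    using sym[of "A z" z] by (simp add: square inner_commute)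
  moreover have "z \<bullet> z = 1"
    using assms(3) by (simp add: dot_square_norm)
  ultimately have "(A z - (z \<bullet> A z) *\<^sub>R z) \<bullet> (A z - (z \<bullet> A z) *\<^sub>R z) = m * (z \<bullet> A z) - (z \<bullet> A z)\<^sup>2"
    by (simp add: inner_diff inner_commute power2_eq_square algebra_simps)
  then show ?thesis
    by (simp add: power2_norm_eq_inner)
qed

lemma tangential_part_tendsto_0:
  fixes A :: "'a::euclidean_space \<Rightarrow> 'a" and T :: "'b \<Rightarrow> 'a \<Rightarrow> 'a"
  assumes A: "linear A" and sym: "\<And>v w. A v \<bullet> w = A w \<bullet> v"
    and square: "\<And>v. A (A v) = m *\<^sub>R A v"
    and T: "\<forall>\<^sub>F t in F. linear (T t)" "\<And>i. i \<in> Basis \<Longrightarrow> ((\<lambda>t. T t i) \<longlongrightarrow> A i) F"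
    and unit: "\<forall>\<^sub>F t in F. norm (z t) = 1"
    and normal: "((\<lambda>t. z t \<bullet> T t (z t)) \<longlongrightarrow> m) F"
  shows "((\<lambda>t. T t (z t) - (z t \<bullet> T t (z t)) *\<^sub>R z t) \<longlongrightarrow> 0) F"
proof -
  define D where "D t = T t (z t) - A (z t)" for t
  define c where "c t = z t \<bullet> A (z t)" for t
  have D: "(D \<longlongrightarrow> 0) F"
    unfolding D_def using unit by (intro linear_family_apply_diff_tendsto_0 T A) (auto elim: eventually_mono)
  have zD: "((\<lambda>t. z t \<bullet> D t) \<longlongrightarrow> 0) F"
  proof (rule Lim_null_comparison[OF _ tendsto_norm_zero[OF D]])
    show "\<forall>\<^sub>F t in F. norm (z t \<bullet> D t) \<le> norm (D t)"
      using unit by eventually_elim (metis Cauchy_Schwarz_ineq2 mult_1 real_norm_def)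
  qed
  have "((\<lambda>t. z t \<bullet> T t (z t) - z t \<bullet> D t) \<longlongrightarrow> m - 0) F"
    by (intro tendsto_intros normal zD)
  then have c: "(c \<longlongrightarrow> m) F"
    unfolding c_def[abs_def] by (simp add: D_def inner_diff_right)
  have "\<forall>\<^sub>F t in F. norm (A (z t) - c t *\<^sub>R z t) = sqrt (m * c t - (c t)\<^sup>2)"
    using unit
  proof eventually_elim
    case (elim t)
    show ?case
      using norm_tangential_part_squared[OF sym square elim] unfolding c_def
      by (metis norm_ge_zero real_sqrt_unique)
  qed
  moreover have "((\<lambda>t. sqrt (m * c t - (c t)\<^sup>2)) \<longlongrightarrow> sqrt (m * m - m\<^sup>2)) F"
    by (intro tendsto_intros c)
  ultimately have "((\<lambda>t. norm (A (z t) - c t *\<^sub>R z t)) \<longlongrightarrow> 0) F"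
    by (simp add: power2_eq_square tendsto_cong)
  then have Az: "((\<lambda>t. A (z t) - c t *\<^sub>R z t) \<longlongrightarrow> 0) F"
    by (simp add: tendsto_norm_zero_iff)
  have zDz: "((\<lambda>t. (z t \<bullet> D t) *\<^sub>R z t) \<longlongrightarrow> 0) F"
    using unit by (intro Lim_null_comparison[OF _ tendsto_norm_zero[OF zD]]) (auto elim: eventually_mono)
  have "((\<lambda>t. D t + (A (z t) - c t *\<^sub>R z t) - (z t \<bullet> D t) *\<^sub>R z t) \<longlongrightarrow> 0 + 0 - 0) F"
    by (intro tendsto_intros D Az zDz)
  then show ?thesis
    by (simp add: D_def c_def inner_diff_right algebra_simps)
qed

section \<open>Rays entering the domain\<close>

lemma eventually_ray_in_open:
  fixes x v :: "'a::real_normed_vector"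
  assumes "open S" "x \<in> S"
  shows "\<forall>\<^sub>F \<tau> in at_right 0. x + \<tau> *\<^sub>R v \<in> S"
proof -
  have "((\<lambda>\<tau>. x + \<tau> *\<^sub>R v) \<longlongrightarrow> x + 0 *\<^sub>R v) (at_right 0)"
    by (intro tendsto_intros)
  then show ?thesis
    using topological_tendstoD[OF _ assms] by simp
qed

lemma ray_difference_quotient_tendsto:
  assumes "(g has_derivative G) (at x)"
  shows "((\<lambda>\<tau>. (g (x + \<tau> *\<^sub>R v) - g x) /\<^sub>R \<tau>) \<longlongrightarrow> G v) (at_right 0)"
proof -
  have "((\<lambda>\<tau>. g (x + \<tau> *\<^sub>R v)) has_derivative (\<lambda>\<tau>. \<tau> *\<^sub>R G v)) (at 0 within {0<..})"
    using has_vector_derivative_along_line[of g G x 0 v] assms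
    by (simp add: has_vector_derivative_def has_derivative_at_withinI)
  then have "((\<lambda>\<tau>. norm ((g (x + \<tau> *\<^sub>R v) - g x) - \<tau> *\<^sub>R G v) / norm \<tau>) \<longlongrightarrow> 0) (at_right 0)"
    unfolding has_derivative_iff_norm by simp
  moreover have "\<forall>\<^sub>F \<tau> in at_right 0.
      norm ((g (x + \<tau> *\<^sub>R v) - g x) - \<tau> *\<^sub>R G v) / norm \<tau> = norm ((g (x + \<tau> *\<^sub>R v) - g x) /\<^sub>R \<tau> - G v)"
    using eventually_at_right_less[of 0]
  proof eventually_elim
    case (elim \<tau>)
    then have "(g (x + \<tau> *\<^sub>R v) - g x) /\<^sub>R \<tau> - G v = ((g (x + \<tau> *\<^sub>R v) - g x) - \<tau> *\<^sub>R G v) /\<^sub>R \<tau>"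
      by (simp add: scaleR_diff_right)
    with elim show ?case
      by (simp add: divide_inverse_commute)
  qed
  ultimately have "((\<lambda>\<tau>. norm ((g (x + \<tau> *\<^sub>R v) - g x) /\<^sub>R \<tau> - G v)) \<longlongrightarrow> 0) (at_right 0)"
    by (rule Lim_transform_eventually)
  then show ?thesis
    unfolding tendsto_norm_zero_iff LIM_zero_iff .
qed

lemma ray_sgn_tendsto:
  assumes "(g has_derivative G) (at x)" "g x = 0" "G v \<noteq> 0"
  shows "\<forall>\<^sub>F \<tau> in at_right 0. g (x + \<tau> *\<^sub>R v) \<noteq> 0"
    and "((\<lambda>\<tau>. sgn (g (x + \<tau> *\<^sub>R v))) \<longlongrightarrow> sgn (G v)) (at_right 0)"
proof -
  have quotient: "((\<lambda>\<tau>. g (x + \<tau> *\<^sub>R v) /\<^sub>R \<tau>) \<longlongrightarrow> G v) (at_right 0)"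
    using ray_difference_quotient_tendsto[OF assms(1), of v] assms(2) by simp
  have "\<forall>\<^sub>F \<tau> in at_right 0. g (x + \<tau> *\<^sub>R v) /\<^sub>R \<tau> \<noteq> 0"
    using tendsto_imp_eventually_ne[OF quotient assms(3)] .
  then show "\<forall>\<^sub>F \<tau> in at_right 0. g (x + \<tau> *\<^sub>R v) \<noteq> 0"
    by (auto elim: eventually_mono)
  have "\<forall>\<^sub>F \<tau> in at_right 0. sgn (g (x + \<tau> *\<^sub>R v) /\<^sub>R \<tau>) = sgn (g (x + \<tau> *\<^sub>R v))"
    using eventually_at_right_less[of 0] by eventually_elim (simp add: sgn_scaleR)
  with tendsto_sgn[OF quotient assms(3)]
  show "((\<lambda>\<tau>. sgn (g (x + \<tau> *\<^sub>R v))) \<longlongrightarrow> sgn (G v)) (at_right 0)"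
    by (rule Lim_transform_eventually)
qed

lemma quadratic_identity_along_entering_ray:
  fixes g :: "'a::euclidean_space \<Rightarrow> 'a"
  assumes "open U" "x \<in> U"
    and g': "\<And>y. y \<in> U \<Longrightarrow> (g has_derivative H y) (at y)"
    and H: "\<And>w. continuous_on U (\<lambda>y. H y w)"
    and equation: "\<And>y. y \<in> \<Omega> \<Longrightarrow> g y \<noteq> 0 \<Longrightarrow> sgn (g y) \<bullet> H y (sgn (g y)) = trace_map (H y) + 1"
    and critical: "g x = 0"
    and ray: "\<forall>\<^sub>F \<tau> in at_right 0. x + \<tau> *\<^sub>R v \<in> \<Omega>"
  shows "H x v \<bullet> H x (H x v) = (trace_map (H x) + 1) * (H x v \<bullet> H x v)"
proof (cases "H x v = 0")
  case True
  then show ?thesis by simp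
next
  case False
  define y where "y \<tau> = x + \<tau> *\<^sub>R v" for \<tau>
  define e where "e = sgn (H x v)"
  have linear: "linear (H z)" if "z \<in> U" for z
    using g'[OF that] by (rule has_derivative_linear)
  have y_U: "\<forall>\<^sub>F \<tau> in at_right 0. y \<tau> \<in> U"
    unfolding y_def using eventually_ray_in_open[OF assms(1,2)] .
  note nonzero = ray_sgn_tendsto(1)[OF g'[OF assms(2)] critical False, folded y_def]
  note n = ray_sgn_tendsto(2)[OF g'[OF assms(2)] critical False, folded y_def e_def]
  have "(y \<longlongrightarrow> x) (at_right 0)"
    unfolding y_def by (intro tendsto_eq_intros) auto
  then have H_y: "((\<lambda>\<tau>. H (y \<tau>) w) \<longlongrightarrow> H x w) (at_right 0)" for w
    using continuous_on_tendsto_compose[OF H _ assms(2) y_U] by blast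
  have "((\<lambda>\<tau>. H (y \<tau>) (sgn (g (y \<tau>)))) \<longlongrightarrow> H x e) (at_right 0)"
  proof (rule linear_family_apply_tendsto[where T="\<lambda>\<tau>. H (y \<tau>)" and z="\<lambda>\<tau>. sgn (g (y \<tau>))" and A="H x"])
    show "\<forall>\<^sub>F \<tau> in at_right 0. linear (H (y \<tau>))"
      using y_U by (rule eventually_mono) (rule linear)
    show "\<forall>\<^sub>F \<tau> in at_right 0. norm (sgn (g (y \<tau>))) \<le> 1"
      by (simp add: norm_sgn)
  qed (use linear[OF assms(2)] H_y n in auto)
  then have "((\<lambda>\<tau>. sgn (g (y \<tau>)) \<bullet> H (y \<tau>) (sgn (g (y \<tau>)))) \<longlongrightarrow> e \<bullet> H x e) (at_right 0)"
    using n by (intro tendsto_intros)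
  moreover have "\<forall>\<^sub>F \<tau> in at_right 0. sgn (g (y \<tau>)) \<bullet> H (y \<tau>) (sgn (g (y \<tau>))) = trace_map (H (y \<tau>)) + 1"
    using ray nonzero by eventually_elim (simp add: y_def equation)
  ultimately have "((\<lambda>\<tau>. trace_map (H (y \<tau>)) + 1) \<longlongrightarrow> e \<bullet> H x e) (at_right 0)"
    by (rule Lim_transform_eventually)
  moreover have "((\<lambda>\<tau>. trace_map (H (y \<tau>)) + 1) \<longlongrightarrow> trace_map (H x) + 1) (at_right 0)"
    unfolding trace_map_def by (intro tendsto_intros H_y)
  ultimately have "e \<bullet> H x e = trace_map (H x) + 1"
    by (rule tendsto_unique[OF trivial_limit_at_right_real])
  moreover have "e \<bullet> H x e = (H x v \<bullet> H x (H x v)) / (H x v \<bullet> H x v)"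
    using linear_scale[OF linear[OF assms(2)]]
    by (simp add: e_def sgn_div_norm dot_square_norm power2_eq_square divide_inverse_commute)
  ultimately show ?thesis
    using False by (simp add: field_simps)
qed

lemma hessian_square_at_critical_point:
  fixes g :: "'a::euclidean_space \<Rightarrow> 'a"
  assumes "open U" "x \<in> U"
    and g': "\<And>y. y \<in> U \<Longrightarrow> (g has_derivative H y) (at y)"
    and H: "\<And>w. continuous_on U (\<lambda>y. H y w)"
    and equation: "\<And>y. y \<in> \<Omega> \<Longrightarrow> g y \<noteq> 0 \<Longrightarrow> sgn (g y) \<bullet> H y (sgn (g y)) = trace_map (H y) + 1"
    and critical: "g x = 0"
    and symmetric: "\<And>v w. H x v \<bullet> w = H x w \<bullet> v"
    and W: "open W" "v \<in> W" and entering: "\<And>w. w \<in> W \<Longrightarrow> \<forall>\<^sub>F \<tau> in at_right 0. x + \<tau> *\<^sub>R w \<in> \<Omega>"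
  shows "H x (H x z) = (trace_map (H x) + 1) *\<^sub>R H x z"
proof (rule square_eq_scaleR_if_quadratic_identity[OF has_derivative_linear[OF g'[OF assms(2)]] symmetric W])
  fix w
  assume "w \<in> W"
  from quadratic_identity_along_entering_ray[OF assms(1,2) g' H equation critical entering[OF this]]
  show "H x w \<bullet> H x (H x w) = (trace_map (H x) + 1) * (H x w \<bullet> H x w)" .
qed

lemma sublevel_set_entering_direction:
  assumes "open U" "x \<in> U" "x \<in> \<Omega>" and sublevel: "\<Omega> \<inter> U = {y \<in> U. \<phi> y \<le> 0}"
    and \<phi>': "(\<phi> has_derivative (\<lambda>v. d \<bullet> v)) (at x)" and descent: "d \<bullet> w < 0"
  shows "\<forall>\<^sub>F \<tau> in at_right 0. x + \<tau> *\<^sub>R w \<in> \<Omega>"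
proof -
  have "DERIV (\<lambda>\<tau>. \<phi> (x + \<tau> *\<^sub>R w)) 0 :> d \<bullet> w"
    using has_vector_derivative_along_line[of \<phi> _ x 0 w] \<phi>'
    by (simp add: has_real_derivative_iff_has_vector_derivative)
  from DERIV_neg_dec_right[OF this descent]
  obtain \<delta> where "\<delta> > 0" "\<And>h. 0 < h \<Longrightarrow> h < \<delta> \<Longrightarrow> \<phi> (x + h *\<^sub>R w) < \<phi> x"
    by auto
  then have "\<forall>\<^sub>F \<tau> in at_right 0. \<phi> (x + \<tau> *\<^sub>R w) < \<phi> x"
    unfolding eventually_at_right_field by auto
  moreover note eventually_ray_in_open[OF assms(1,2), of w]
  ultimately show ?thesis
  proof eventually_elim
    case (elim \<tau>)
    moreover have "\<phi> x \<le> 0"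
      using sublevel assms(2,3) by blast
    ultimately have "x + \<tau> *\<^sub>R w \<in> {y \<in> U. \<phi> y \<le> 0}"
      by simp
    then show ?case
      unfolding sublevel[symmetric] by blast
  qed
qed

lemma smooth_mean_convex_boundary_entering_directions:
  assumes "smooth_mean_convex_boundary \<Omega>" "x \<in> \<Omega>"
  obtains W v where "open W" "v \<in> W" "\<And>w. w \<in> W \<Longrightarrow> \<forall>\<^sub>F \<tau> in at_right 0. x + \<tau> *\<^sub>R w \<in> \<Omega>"
proof (cases "x \<in> interior \<Omega>")
  case True
  show ?thesis
  proof (rule that[of UNIV 0])
    fix w
    show "\<forall>\<^sub>F \<tau> in at_right 0. x + \<tau> *\<^sub>R w \<in> \<Omega>"
      using eventually_ray_in_open[OF open_interior True] by (rule eventually_mono) (use interior_subset in blast)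
  qed auto
next
  case False
  with assms(2) have "x \<in> frontier \<Omega>"
    using closure_subset by (auto simp: frontier_def)
  with assms(1) obtain U \<phi> where U: "open U" "x \<in> U" "smooth_on U \<phi>"
      and sublevel: "\<Omega> \<inter> U = {y \<in> U. \<phi> y \<le> 0}" and "grad \<phi> x \<noteq> 0"
    unfolding smooth_mean_convex_boundary_def by blast
  have "dderivs [] \<phi> differentiable (at x)"
    using U unfolding smooth_on_def by blast
  then have \<phi>': "(\<phi> has_derivative (\<lambda>v. grad \<phi> x \<bullet> v)) (at x)"
    by (simp add: has_derivative_grad)
  show ?thesis
  proof (rule that[of "{w. grad \<phi> x \<bullet> w < 0}" "- grad \<phi> x"])
    show "open {w. grad \<phi> x \<bullet> w < 0}"
      by (rule open_halfspace_lt)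
    show "- grad \<phi> x \<in> {w. grad \<phi> x \<bullet> w < 0}"
      using \<open>grad \<phi> x \<noteq> 0\<close> by simp
  qed (simp add: sublevel_set_entering_direction[OF U(1,2) assms(2) sublevel \<phi>'])
qed

section \<open>Flow lines leaving a critical point\<close>

lemma abs_integral_le_ln_ratio:
  fixes G :: "real \<Rightarrow> real"
  assumes "0 < a" "a \<le> b" and bound: "\<And>t. t \<in> {a..b} \<Longrightarrow> 0 \<le> G t \<and> G t \<le> c / t"
  shows "\<bar>integral {a..b} G\<bar> \<le> c * ln (b / a)"
proof -
  have "0 \<le> c / a"
    using bound[of a] assms(1,2) by force
  then have "c \<ge> 0"
    using assms(1) by (simp add: zero_le_divide_iff)
  have "((\<lambda>t. c / t) has_integral (c * ln b - c * ln a)) {a..b}"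
  proof (rule fundamental_theorem_of_calculus[OF assms(2)])
    fix t
    assume "t \<in> {a..b}"
    then have "t > 0" using assms(1) by auto
    then show "((\<lambda>t. c * ln t) has_vector_derivative c / t) (at t within {a..b})"
      by (auto intro!: derivative_eq_intros simp: has_real_derivative_iff_has_vector_derivative[symmetric])
  qed
  moreover have "c * ln b - c * ln a = c * ln (b / a)"
    using assms(1,2) by (simp add: ln_div algebra_simps)
  ultimately have c_integral: "((\<lambda>t. c / t) has_integral c * ln (b / a)) {a..b}"
    by simp
  show ?thesis
  proof (cases "G integrable_on {a..b}")
    case True
    have "0 \<le> integral {a..b} G"
      by (rule Henstock_Kurzweil_Integration.integral_nonneg[OF True]) (use bound in auto)
    moreover have "integral {a..b} G \<le> c * ln (b / a)"
      using has_integral_le[OF integrable_integral[OF True] c_integral] bound by simp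
    ultimately show ?thesis
      by simp
  next
    case False
    \<comment> \<open>a non-integrable function has integral 0 by convention\<close>
    then show ?thesis
      using \<open>c \<ge> 0\<close> assms(1,2) by (simp add: not_integrable_integral)
  qed
qed

lemma integral_dilated_interval_tendsto_0:
  fixes G :: "real \<Rightarrow> real"
  assumes "\<Lambda> > 1" and nonneg: "\<And>t. t > 0 \<Longrightarrow> G t \<ge> 0"
    and decay: "((\<lambda>t. t * G t) \<longlongrightarrow> 0) (at_right 0)"
  shows "((\<lambda>s. integral {s..\<Lambda> * s} G) \<longlongrightarrow> 0) (at_right 0)"
proof (rule tendstoI)
  fix \<epsilon> :: real
  assume "\<epsilon> > 0"
  have "ln \<Lambda> > 0" using \<open>\<Lambda> > 1\<close> by simp
  define c where "c = \<epsilon> / (2 * ln \<Lambda>)"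
  have "c > 0" and "c * ln \<Lambda> < \<epsilon>"
    using \<open>\<epsilon> > 0\<close> \<open>ln \<Lambda> > 0\<close> by (auto simp: c_def)
  from order_tendstoD(2)[OF decay \<open>c > 0\<close>] obtain \<delta> where "\<delta> > 0"
    and \<delta>: "\<And>t. 0 < t \<Longrightarrow> t < \<delta> \<Longrightarrow> t * G t < c"
    unfolding eventually_at_right_field by auto
  have "\<forall>\<^sub>F s in at_right 0. 0 < s \<and> \<Lambda> * s < \<delta>"
    unfolding eventually_at_right_field
    using \<open>\<delta> > 0\<close> \<open>\<Lambda> > 1\<close> by (intro exI[of _ "\<delta> / \<Lambda>"]) (auto simp: field_simps)
  then show "\<forall>\<^sub>F s in at_right 0. dist (integral {s..\<Lambda> * s} G) 0 < \<epsilon>"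
  proof eventually_elim
    case (elim s)
    then have "\<bar>integral {s..\<Lambda> * s} G\<bar> \<le> c * ln (\<Lambda> * s / s)"
      using \<open>\<Lambda> > 1\<close> nonneg \<delta>
      by (intro abs_integral_le_ln_ratio) (auto simp: field_simps intro!: less_imp_le[OF \<delta>])
    then show ?case
      using elim \<open>c * ln \<Lambda> < \<epsilon>\<close> by simp
  qed
qed

locale flow_line_from_critical_point =
  fixes g :: "'a::euclidean_space \<Rightarrow> 'a" and H :: "'a \<Rightarrow> 'a \<Rightarrow> 'a"
    and \<gamma> :: "real \<Rightarrow> 'a" and L :: real
  assumes L_pos: "0 < L"
    and continuous_curve: "continuous_on {0..L} \<gamma>"
    and critical: "g (\<gamma> 0) = 0"
    and regular: "\<And>t. t \<in> {0<..L} \<Longrightarrow> g (\<gamma> t) \<noteq> 0"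
    and flow: "\<And>t. t \<in> {0<..L} \<Longrightarrow> (\<gamma> has_vector_derivative - sgn (g (\<gamma> t))) (at t within {0..L})"
    and g_deriv: "\<And>t. t \<in> {0..L} \<Longrightarrow> (g has_derivative H (\<gamma> t)) (at (\<gamma> t))"
    and H_continuous: "\<And>v. continuous_on {0..L} (\<lambda>t. H (\<gamma> t) v)"
    and equation: "\<And>t. t \<in> {0<..L} \<Longrightarrow>
      sgn (g (\<gamma> t)) \<bullet> H (\<gamma> t) (sgn (g (\<gamma> t))) = trace_map (H (\<gamma> t)) + 1"
    and symmetric: "\<And>v w. H (\<gamma> 0) v \<bullet> w = H (\<gamma> 0) w \<bullet> v"
    and square: "\<And>v. H (\<gamma> 0) (H (\<gamma> 0) v) = (trace_map (H (\<gamma> 0)) + 1) *\<^sub>R H (\<gamma> 0) v"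
begin

lemma eventually_in_interval: "\<forall>\<^sub>F t in at_right 0. t \<in> {0<..<L}"
  using L_pos unfolding eventually_at_right_field by auto

lemma velocity: "t \<in> {0<..<L} \<Longrightarrow> (\<gamma> has_vector_derivative - sgn (g (\<gamma> t))) (at t)"
  using flow[of t] at_within_interior[of t "{0..L}"] by simp

lemma linear_H: "t \<in> {0..L} \<Longrightarrow> linear (H (\<gamma> t))"
  using g_deriv has_derivative_linear by blast

lemma norm_has_real_derivative:
  assumes "t \<in> {0<..<L}"
  shows "((\<lambda>t. norm (g (\<gamma> t))) has_real_derivative - (trace_map (H (\<gamma> t)) + 1)) (at t)"
proof -
  have "((\<lambda>t. g (\<gamma> t)) has_derivative (\<lambda>h. H (\<gamma> t) (h *\<^sub>R - sgn (g (\<gamma> t))))) (at t)"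
    using has_derivative_compose[OF velocity[OF assms, unfolded has_vector_derivative_def] g_deriv] assms
    by simp
  from has_derivative_norm_compose[OF this] regular assms
  have "((\<lambda>t. norm (g (\<gamma> t))) has_derivative
      (\<lambda>h. sgn (g (\<gamma> t)) \<bullet> H (\<gamma> t) (h *\<^sub>R - sgn (g (\<gamma> t))))) (at t)"
    by simp
  then show ?thesis
  proof (rule has_derivative_imp_has_field_derivative)
    show "h * - (trace_map (H (\<gamma> t)) + 1) = sgn (g (\<gamma> t)) \<bullet> H (\<gamma> t) (h *\<^sub>R - sgn (g (\<gamma> t)))" for h
      using equation[of t] linear_H[of t] assms by (simp add: linear_scale linear_neg algebra_simps)
  qed
qed

lemma H_tendsto: "((\<lambda>t. H (\<gamma> t) v) \<longlongrightarrow> H (\<gamma> 0) v) (at_right 0)"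
  using H_continuous[of v] L_pos
  by (simp add: continuous_on_def at_within_Icc_at_right[symmetric])

lemma trace_tendsto:
  "((\<lambda>t. trace_map (H (\<gamma> t)) + 1) \<longlongrightarrow> trace_map (H (\<gamma> 0)) + 1) (at_right 0)"
  unfolding trace_map_def by (intro tendsto_intros H_tendsto)

lemma norm_over_time_tendsto:
  "((\<lambda>t. norm (g (\<gamma> t)) / t) \<longlongrightarrow> - (trace_map (H (\<gamma> 0)) + 1)) (at_right 0)"
proof (rule lhopital_right_0)
  have "isCont g (\<gamma> 0)"
    using g_deriv[of 0] L_pos has_derivative_continuous by auto
  moreover have "(\<gamma> \<longlongrightarrow> \<gamma> 0) (at_right 0)"
    using continuous_curve L_pos by (simp add: continuous_on_def at_within_Icc_at_right[symmetric])
  ultimately have "((\<lambda>t. g (\<gamma> t)) \<longlongrightarrow> 0) (at_right 0)"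
    using isCont_tendsto_compose critical by fastforce
  then show "((\<lambda>t. norm (g (\<gamma> t))) \<longlongrightarrow> 0) (at_right 0)"
    by (rule tendsto_norm_zero)
  show "\<forall>\<^sub>F t in at_right 0. DERIV (\<lambda>t. norm (g (\<gamma> t))) t :> - (trace_map (H (\<gamma> t)) + 1)"
    using eventually_in_interval by eventually_elim (rule norm_has_real_derivative)
  show "((\<lambda>t. - (trace_map (H (\<gamma> t)) + 1) / 1) \<longlongrightarrow> - (trace_map (H (\<gamma> 0)) + 1)) (at_right 0)"
    using tendsto_minus[OF trace_tendsto] by simp
qed (auto intro: tendsto_ident_at eventually_at_right_less[THEN eventually_mono] DERIV_ident)

lemma trace_plus_one_neg: "trace_map (H (\<gamma> 0)) + 1 < 0"
proof -
  have "\<forall>\<^sub>F t in at_right 0. 0 \<le> norm (g (\<gamma> t)) / t"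
    using eventually_at_right_less[of 0] by eventually_elim simp
  from tendsto_lowerbound[OF norm_over_time_tendsto this trivial_limit_at_right_real]
  have "0 \<le> - (trace_map (H (\<gamma> 0)) + 1)" .
  moreover have "trace_map (H (\<gamma> 0)) + 1 \<noteq> 0"
  proof
    assume "trace_map (H (\<gamma> 0)) + 1 = 0"
    then have "H (\<gamma> 0) v \<bullet> H (\<gamma> 0) v = 0" for v
      using symmetric[of "H (\<gamma> 0) v" v] square[of v] by simp
    then have "trace_map (H (\<gamma> 0)) = 0"
      by (simp add: trace_map_def)
    with \<open>trace_map (H (\<gamma> 0)) + 1 = 0\<close> show False by simp
  qed
  ultimately show ?thesis by linarith
qed

lemma acceleration:
  assumes "t \<in> {0<..<L}"
  shows "vector_derivative (\<lambda>r. vector_derivative \<gamma> (at r)) (at t) =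
    (H (\<gamma> t) (sgn (g (\<gamma> t))) - (sgn (g (\<gamma> t)) \<bullet> H (\<gamma> t) (sgn (g (\<gamma> t)))) *\<^sub>R sgn (g (\<gamma> t)))
      /\<^sub>R norm (g (\<gamma> t))"
    (is "_ = ?k")
proof -
  have "((\<lambda>y. sgn (g y)) has_derivative
      (\<lambda>v. (H (\<gamma> t) v - (sgn (g (\<gamma> t)) \<bullet> H (\<gamma> t) v) *\<^sub>R sgn (g (\<gamma> t))) /\<^sub>R norm (g (\<gamma> t))))
      (at (\<gamma> t))"
    using assms regular by (intro has_derivative_sgn_compose g_deriv) auto
  from has_derivative_compose[OF velocity[OF assms, unfolded has_vector_derivative_def] this]
  have "((\<lambda>r. - sgn (g (\<gamma> r))) has_vector_derivative ?k) (at t)"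
    using linear_H[of t] assms
    by (auto simp: has_vector_derivative_def linear_scale linear_neg algebra_simps
        dest: has_derivative_minus)
  then have "((\<lambda>r. vector_derivative \<gamma> (at r)) has_vector_derivative ?k) (at t)"
    by (rule has_vector_derivative_transform_within_open[of _ _ _ "{0<..<L}"])
      (use assms in \<open>auto simp: vector_derivative_at[OF velocity]\<close>)
  then show ?thesis
    by (rule vector_derivative_at)
qed

lemma curvature_numerator_tendsto_0:
  "((\<lambda>t. H (\<gamma> t) (sgn (g (\<gamma> t))) - (sgn (g (\<gamma> t)) \<bullet> H (\<gamma> t) (sgn (g (\<gamma> t)))) *\<^sub>R sgn (g (\<gamma> t)))
     \<longlongrightarrow> 0) (at_right 0)"
proof (rule tangential_part_tendsto_0[OF linear_H symmetric square])
  show "\<forall>\<^sub>F t in at_right 0. linear (H (\<gamma> t))"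
    using eventually_in_interval by eventually_elim (simp add: linear_H)
  show "\<forall>\<^sub>F t in at_right 0. norm (sgn (g (\<gamma> t))) = 1"
    using eventually_in_interval by eventually_elim (simp add: norm_sgn regular)
  have "\<forall>\<^sub>F t in at_right 0. trace_map (H (\<gamma> t)) + 1 = sgn (g (\<gamma> t)) \<bullet> H (\<gamma> t) (sgn (g (\<gamma> t)))"
    using eventually_in_interval by eventually_elim (simp add: equation)
  with trace_tendsto
  show "((\<lambda>t. sgn (g (\<gamma> t)) \<bullet> H (\<gamma> t) (sgn (g (\<gamma> t)))) \<longlongrightarrow> trace_map (H (\<gamma> 0)) + 1) (at_right 0)"
    by (rule Lim_transform_eventually)
qed (use L_pos H_tendsto in auto)

lemma time_weighted_curvature_tendsto_0:
  "((\<lambda>t. t * norm (vector_derivative (\<lambda>r. vector_derivative \<gamma> (at r)) (at t))) \<longlongrightarrow> 0) (at_right 0)"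
proof -
  have "((\<lambda>t. norm (H (\<gamma> t) (sgn (g (\<gamma> t))) -
      (sgn (g (\<gamma> t)) \<bullet> H (\<gamma> t) (sgn (g (\<gamma> t)))) *\<^sub>R sgn (g (\<gamma> t))) / (norm (g (\<gamma> t)) / t))
      \<longlongrightarrow> 0 / - (trace_map (H (\<gamma> 0)) + 1)) (at_right 0)"
    using trace_plus_one_neg
    by (intro tendsto_divide tendsto_norm_zero curvature_numerator_tendsto_0 norm_over_time_tendsto) simp
  moreover have "\<forall>\<^sub>F t in at_right 0.
      norm (H (\<gamma> t) (sgn (g (\<gamma> t))) -
        (sgn (g (\<gamma> t)) \<bullet> H (\<gamma> t) (sgn (g (\<gamma> t)))) *\<^sub>R sgn (g (\<gamma> t))) / (norm (g (\<gamma> t)) / t) =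
      t * norm (vector_derivative (\<lambda>r. vector_derivative \<gamma> (at r)) (at t))"
    using eventually_in_interval by eventually_elim (simp add: acceleration divide_inverse_commute)
  ultimately show ?thesis
    by (simp add: Lim_transform_eventually)
qed

theorem integral_curvature_tendsto_0:
  assumes "\<Lambda> > 1"
  shows "((\<lambda>s. integral {s..\<Lambda> * s}
            (\<lambda>t. norm (vector_derivative (\<lambda>r. vector_derivative \<gamma> (at r)) (at t))))
          \<longlongrightarrow> 0) (at_right 0)"
  by (rule integral_dilated_interval_tendsto_0[OF assms _ time_weighted_curvature_tendsto_0]) simp

end

theorem lemma4p4:
  fixes \<Omega> :: "'a::euclidean_space set" and u :: "'a \<Rightarrow> real"
    and \<gamma> :: "real \<Rightarrow> 'a" and L \<Lambda> :: real
  assumes "compact \<Omega>" and "connected \<Omega>"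
    and "smooth_mean_convex_boundary \<Omega>"
    and "\<exists>U. \<Omega> \<subseteq> U \<and> C2_on U u"
    and "\<forall>x\<in>\<Omega>. grad u x \<noteq> 0 \<longrightarrow>
           -1 = norm (grad u x) * divergence (\<lambda>y. grad u y /\<^sub>R norm (grad u y)) x"
    and "\<exists>c. \<forall>x\<in>frontier \<Omega>. u x = c"
    and "Sup (u ` \<Omega>) = 0"
    and "L > 0" and "continuous_on {0..L} \<gamma>"
    and "\<gamma> 0 \<in> \<Omega>" and "grad u (\<gamma> 0) = 0"
    and "\<forall>s\<in>{0<..L}. \<gamma> s \<in> \<Omega> \<and> grad u (\<gamma> s) \<noteq> 0 \<and>
           (\<gamma> has_vector_derivative - (grad u (\<gamma> s) /\<^sub>R norm (grad u (\<gamma> s)))) (at s within {0..L})"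
    and "\<Lambda> > 1"
  shows "((\<lambda>s. integral {s..\<Lambda> * s}
            (\<lambda>t. norm (vector_derivative (\<lambda>r. vector_derivative \<gamma> (at r)) (at t))))
          \<longlongrightarrow> 0) (at_right 0)"
proof -
  obtain U where "\<Omega> \<subseteq> U" and u: "C2_on U u"
    using assms(4) by blast
  have "open U"
    using u by (simp add: C2_on_def)
  have "\<gamma> t \<in> \<Omega>" if "t \<in> {0..L}" for t
    using that assms(10,12) by (cases "t = 0") auto
  with \<open>\<Omega> \<subseteq> U\<close> have curve_U: "\<gamma> ` {0..L} \<subseteq> U" and "\<gamma> 0 \<in> U"
    using assms(8) by auto
  note grad' = C2_on_has_derivative_hess[OF u] and hess = C2_on_continuous_on_hess[OF u]
  have equation: "sgn (grad u y) \<bullet> hess u y (sgn (grad u y)) = trace_map (hess u y) + 1"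
    if "y \<in> \<Omega>" "grad u y \<noteq> 0" for y
    using assms(5) that \<open>\<Omega> \<subseteq> U\<close> arrival_time_equation_iff[OF grad'] by blast
  obtain W v where W: "open W" "v \<in> W" "\<And>w. w \<in> W \<Longrightarrow> \<forall>\<^sub>F \<tau> in at_right 0. \<gamma> 0 + \<tau> *\<^sub>R w \<in> \<Omega>"
    using smooth_mean_convex_boundary_entering_directions[OF assms(3,10)] by blast
  interpret flow_line_from_critical_point "grad u" "hess u" \<gamma> L
  proof
    show "continuous_on {0..L} (\<lambda>t. hess u (\<gamma> t) w)" for w
      using continuous_on_compose2[OF hess assms(9) curve_U] .
    show "hess u (\<gamma> 0) w \<bullet> w' = hess u (\<gamma> 0) w' \<bullet> w" for w w'
      using C2_on_hess_symmetric[OF u \<open>\<gamma> 0 \<in> U\<close>] .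
    then show "hess u (\<gamma> 0) (hess u (\<gamma> 0) w) = (trace_map (hess u (\<gamma> 0)) + 1) *\<^sub>R hess u (\<gamma> 0) w" for w
      using hessian_square_at_critical_point[OF \<open>open U\<close> \<open>\<gamma> 0 \<in> U\<close> grad' hess equation assms(11) _ W]
      by blast
  qed (use assms(8,9,11,12) curve_U grad' equation in \<open>auto simp: sgn_div_norm image_subset_iff\<close>)
  show ?thesis
    using assms(13) by (rule integral_curvature_tendsto_0)
qed

end
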